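(* Let $\mathcal A=(Q,d,T_u,T_f,T_s,\emptyset)$ be an ABVASS, $q_r\in Q$, $\vec v_0\in\mathbb N^d$ and $Q_\ell\subseteq Q$. If $\mathcal A$ has a $(q_r,\vec v_0)$-rooted $Q_\ell$-leaf-covering deduction tree, then it has such a deduction tree of height at most $H(d,|Q|,\max^-(T_u))$.
   Context: An ABVASS is a tuple $\mathcal A=(Q,d,T_u,T_f,T_s,\emptyset)$ with $Q$ a finite set of states, $d\in\mathbb N$, and finite sets of unary rules $T_u\subseteq Q\times\mathbb Z^d\times Q$, fork rules $T_f\subseteq Q^3$, split rules $T_s\subseteq Q^3$. A deduction tree is a finite tree labelled by configurations $(q,\vec v)\in Q\times\mathbb N^d$ where each internal node $(q,\vec v)$ has either one child $(q_1,\vec v+\vec u)\in Q\times\mathbb N^d$ for a unary rule $(q,\vec u,q_1)$, two children $(q_1,\vec v),(q_2,\vec v)$ for a fork rule $(q,q_1,q_2)$, or two children $(q_1,\vec v_1),(q_2,\vec v_2)$ with $\vec v_1+\vec v_2=\vec v$ for a split rule $(q,q_1,q_2)$. It is $(q_r,\vec v_0)$-rooted if its root is labelled $(q_r,\vec v_0)$, $Q_\ell$-leaf-covering if every leaf label $(q,\vec v)$ has $q\in Q_\ell$ (no condition on $\vec v$), and its height is the maximum number of edges on a root-to-leaf path. $\max^-(T_u)$ is the largest absolute value of a negative integer occurring in a vector of $T_u$ (and $0$ if there is none). For integers $d,m\ge0$, $s\ge1$: $H(0,s,m)=s$ and $H(d+1,s,m)=s\,(m\cdot 2^{H(d,s,m)})^{d+1}+H(d,s,m)$.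 *)

theory Defs
  imports Main
begin

text \<open>ABVASS without the (here empty) last component. Vectors in Z^d / N^d are
  lists of length d.\<close>

record 'q abvass =
  states :: "'q set"
  dim    :: nat
  unary  :: "('q \<times> int list \<times> 'q) set"
  fork   :: "('q \<times> 'q \<times> 'q) set"
  split  :: "('q \<times> 'q \<times> 'q) set"

definition wf_abvass :: "'q abvass \<Rightarrow> bool" where
  "wf_abvass A \<longleftrightarrow> finite (states A)
     \<and> finite (unary A) \<and> finite (fork A) \<and> finite (split A)
     \<and> (\<forall>(q,u,q1)\<in>unary A. q \<in> states A \<and> q1 \<in> states A \<and> length u = dim A)
     \<and> (\<forall>(q,q1,q2)\<in>fork A. q \<in> states A \<and> q1 \<in> states A \<and> q2 \<in> states A)
     \<and> (\<forall>(q,q1,q2)\<in>split A. q \<in> states A \<and> q1 \<in> states A \<and> q2 \<in> states A)"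

datatype 'q dtree = Node "'q \<times> nat list" "'q dtree list"

fun label :: "'q dtree \<Rightarrow> 'q \<times> nat list" where
  "label (Node l cs) = l"

definition vadd :: "nat list \<Rightarrow> int list \<Rightarrow> int list" where
  "vadd v u = map2 (\<lambda>a b. int a + b) v u"

definition is_config :: "'q abvass \<Rightarrow> 'q \<times> nat list \<Rightarrow> bool" where
  "is_config A c \<longleftrightarrow> fst c \<in> states A \<and> length (snd c) = dim A"

definition step_ok :: "'q abvass \<Rightarrow> 'q \<times> nat list \<Rightarrow> ('q \<times> nat list) list \<Rightarrow> bool" where
  "step_ok A c ls \<longleftrightarrow>
     (case ls of
        [] \<Rightarrow> True
      | [c1] \<Rightarrow> (\<exists>u. (fst c, u, fst c1) \<in> unary A \<and> map int (snd c1) = vadd (snd c) u)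
      | [c1, c2] \<Rightarrow>
          ((fst c, fst c1, fst c2) \<in> fork A \<and> snd c1 = snd c \<and> snd c2 = snd c)
          \<or> ((fst c, fst c1, fst c2) \<in> split A \<and> map2 (+) (snd c1) (snd c2) = snd c)
      | _ \<Rightarrow> False)"

fun deduction_tree :: "'q abvass \<Rightarrow> 'q dtree \<Rightarrow> bool" where
  "deduction_tree A (Node c cs) \<longleftrightarrow>
     is_config A c \<and> step_ok A c (map label cs) \<and> (\<forall>t\<in>set cs. deduction_tree A t)"

fun leaf_covering :: "'q set \<Rightarrow> 'q dtree \<Rightarrow> bool" where
  "leaf_covering Ql (Node c cs) \<longleftrightarrow>
     (if cs = [] then fst c \<in> Ql else (\<forall>t\<in>set cs. leaf_covering Ql t))"

fun height :: "'q dtree \<Rightarrow> nat" where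
  "height (Node c cs) = (if cs = [] then 0 else Suc (fold max (map height cs) 0))"

definition max_neg :: "'q abvass \<Rightarrow> nat" where
  "max_neg A = Max (insert 0 {nat (- x) | x q u q1. (q, u, q1) \<in> unary A \<and> x \<in> set u \<and> x < 0})"

fun H :: "nat \<Rightarrow> nat \<Rightarrow> nat \<Rightarrow> nat" where
  "H 0 s m = s"
| "H (Suc d) s m = s * (m * 2 ^ H d s m) ^ (d + 1) + H d s m"

end

theory Submission
  imports Defs "HOL-Library.FuncSet"
begin

text \<open>Induction on the number of coordinates. Write \<open>h\<close> for the bound in one dimension less
  and \<open>B = m \<cdot> 2\<^sup>h\<close>. If some coordinate of a coverable configuration is at least \<open>B\<close>, drop
  it, shorten the tree for the remaining coordinates to height \<open>h\<close>, and put the coordinate back: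
  along a tree of height \<open>h\<close> it can be distributed over the splits so that no unary rule drives
  it negative. The configurations with all coordinates below \<open>B\<close> are at most \<open>|Q| \<cdot> B\<^sup>d\<close>
  many, and the set of those coverable within height \<open>h + k\<close> grows with \<open>k\<close> until it
  stabilises, which happens after at most \<open>|Q| \<cdot> B\<^sup>d\<close> steps.\<close>

section \<open>Deduction trees on a set of coordinates\<close>

definition zext :: "int list \<Rightarrow> nat \<Rightarrow> int" where
  "zext u i = (if i < length u then u ! i else 0)"

definition proj :: "nat set \<Rightarrow> (nat \<Rightarrow> int) \<Rightarrow> nat \<Rightarrow> int" where
  "proj J f i = (if i \<in> J then f i else 0)"

definition proj_config :: "'q abvass \<Rightarrow> nat set \<Rightarrow> 'q \<Rightarrow> (nat \<Rightarrow> int) \<Rightarrow> bool" where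
  "proj_config A J q v \<longleftrightarrow> q \<in> states A \<and> (\<forall>i\<in>J. 0 \<le> v i) \<and> (\<forall>i. i \<notin> J \<longrightarrow> v i = 0)"

text \<open>\<open>coverable A Ql J n q v\<close>: there is a \<open>Ql\<close>-leaf-covering deduction tree of height at most
  \<open>n\<close> rooted at \<open>(q, v)\<close> in the system that only keeps the coordinates in \<open>J\<close>.\<close>

inductive coverable :: "'q abvass \<Rightarrow> 'q set \<Rightarrow> nat set \<Rightarrow> nat \<Rightarrow> 'q \<Rightarrow> (nat \<Rightarrow> int) \<Rightarrow> bool"
  for A Ql J where
  leaf: "proj_config A J q v \<Longrightarrow> q \<in> Ql \<Longrightarrow> coverable A Ql J n q v"
| unary: "proj_config A J q v \<Longrightarrow> (q, u, q1) \<in> unary A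
    \<Longrightarrow> coverable A Ql J n q1 (proj J (\<lambda>i. v i + zext u i)) \<Longrightarrow> coverable A Ql J (Suc n) q v"
| fork: "proj_config A J q v \<Longrightarrow> (q, q1, q2) \<in> fork A
    \<Longrightarrow> coverable A Ql J n q1 v \<Longrightarrow> coverable A Ql J n q2 v \<Longrightarrow> coverable A Ql J (Suc n) q v"
| split: "proj_config A J q v \<Longrightarrow> (q, q1, q2) \<in> split A
    \<Longrightarrow> coverable A Ql J n q1 v1 \<Longrightarrow> coverable A Ql J n q2 v2 \<Longrightarrow> \<forall>i. v1 i + v2 i = v i
    \<Longrightarrow> coverable A Ql J (Suc n) q v"

lemma coverable_proj_config: "coverable A Ql J n q v \<Longrightarrow> proj_config A J q v"
  by (induction rule: coverable.induct) auto

lemma coverable_mono: "coverable A Ql J n q v \<Longrightarrow> n \<le> n' \<Longrightarrow> coverable A Ql J n' q v"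
proof (induction arbitrary: n' rule: coverable.induct)
  case (leaf q v n)
  then show ?case by (auto intro: coverable.leaf)
next
  case (unary q v u q1 n)
  then obtain k where "n' = Suc k" "n \<le> k" by (cases n') auto
  with unary show ?case by (auto intro: coverable.unary)
next
  case (fork q v q1 q2 n)
  then obtain k where "n' = Suc k" "n \<le> k" by (cases n') auto
  with fork show ?case by (auto intro: coverable.fork)
next
  case (split q v q1 q2 n v1 v2)
  then obtain k where "n' = Suc k" "n \<le> k" by (cases n') auto
  with split show ?case by (auto intro: coverable.split)
qed

lemma coverable_Suc_transfer:
  assumes "coverable A Ql J (Suc k) q v"
    and "\<And>q' v'. coverable A Ql J k q' v' \<Longrightarrow> coverable A Ql J k' q' v'"
  shows "coverable A Ql J (Suc k') q v"
  using assms(1)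
proof (cases rule: coverable.cases)
  case leaf
  then show ?thesis by (auto intro: coverable.leaf)
next
  case unary
  then show ?thesis using assms(2) by (auto intro: coverable.unary)
next
  case fork
  then show ?thesis using assms(2) by (auto intro: coverable.fork)
next
  case split
  then show ?thesis using assms(2) by (auto intro: coverable.split)
qed

lemma coverable_proj:
  "coverable A Ql J n q v \<Longrightarrow> J' \<subseteq> J \<Longrightarrow> coverable A Ql J' n q (proj J' v)"
proof (induction rule: coverable.induct)
  case (leaf q v n)
  then show ?case by (intro coverable.leaf) (auto simp: proj_config_def proj_def)
next
  case (unary q v u q1 n)
  have "proj J' (proj J (\<lambda>i. v i + zext u i)) = proj J' (\<lambda>i. proj J' v i + zext u i)"
    using unary.prems by (auto simp: proj_def fun_eq_iff)
  with unary.IH unary.prems have "coverable A Ql J' n q1 (proj J' (\<lambda>i. proj J' v i + zext u i))"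
    by simp
  moreover have "proj_config A J' q (proj J' v)"
    using unary(1) unary.prems by (auto simp: proj_config_def proj_def)
  ultimately show ?case using coverable.unary[OF _ unary(2)] by blast
next
  case (fork q v q1 q2 n)
  then show ?case by (intro coverable.fork[OF _ fork(2)]) (auto simp: proj_config_def proj_def)
next
  case (split q v q1 q2 n v1 v2)
  then show ?case
    by (intro coverable.split[OF _ split(2) split(6,7)]) (auto simp: proj_config_def proj_def)
qed

lemma coverable_insert_large:
  assumes "coverable A Ql J n q v" "j \<notin> J" "int m * (2 ^ n - 1) \<le> x"
    and unary_ge: "\<And>q u q1 i. (q, u, q1) \<in> unary A \<Longrightarrow> - int m \<le> zext u i"
  shows "coverable A Ql (insert j J) n q (v(j := x))"
  using assms(1-3)
proof (induction arbitrary: x rule: coverable.induct)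
  case (leaf q v n)
  have "0 \<le> int m * (2 ^ n - 1)" by simp
  with leaf have "0 \<le> x" by linarith
  with leaf show ?case by (intro coverable.leaf) (auto simp: proj_config_def)
next
  case (unary q v u q1 n)
  have "int m \<le> int m * 2 ^ n" by (simp add: mult_le_cancel_left1)
  moreover have "- int m \<le> zext u j" using unary_ge unary(2) by blast
  ultimately have x: "int m * (2 ^ n - 1) \<le> x + zext u j" using unary.prems
    by (simp add: algebra_simps)
  have "(proj J (\<lambda>i. v i + zext u i))(j := x + zext u j)
      = proj (insert j J) (\<lambda>i. (v(j := x)) i + zext u i)"
    by (auto simp: proj_def)
  with unary.IH[OF unary.prems(1) x]
  have c: "coverable A Ql (insert j J) n q1 (proj (insert j J) (\<lambda>i. (v(j := x)) i + zext u i))"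
    by simp
  have "0 \<le> int m * (2 ^ Suc n - 1)" by simp
  with unary.prems have "0 \<le> x" by linarith
  with unary.hyps(1) show ?case
    by (intro coverable.unary[OF _ unary(2) c]) (auto simp: proj_config_def)
next
  case (fork q v q1 q2 n)
  have "int m * (2 ^ n - 1) \<le> int m * (2 ^ Suc n - 1)" by (simp add: algebra_simps)
  with fork.prems have x: "int m * (2 ^ n - 1) \<le> x" by linarith
  have "0 \<le> int m * (2 ^ Suc n - 1)" by simp
  with fork.prems have "0 \<le> x" by linarith
  with fork.hyps(1) show ?case
    by (intro coverable.fork[OF _ fork(2) fork.IH[OF fork.prems(1) x]])
      (auto simp: proj_config_def)
next
  case (split q v q1 q2 n v1 v2)
  define c where "c = int m * (2 ^ n - 1)"
  \<comment> \<open>the left child gets \<open>x - c\<close> and the right child \<open>c\<close>; both are at least \<open>c\<close>\<close>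
  have "int m * (2 ^ Suc n - 1) = 2 * c + int m" by (simp add: c_def algebra_simps)
  with split.prems have x: "2 * c \<le> x" by simp
  have "0 \<le> c" by (simp add: c_def)
  with x have "c \<le> x - c" "0 \<le> x" by simp_all
  have "coverable A Ql (insert j J) n q1 (v1(j := x - c))"
    using split.IH(1)[OF split.prems(1)] \<open>c \<le> x - c\<close> unfolding c_def by blast
  moreover have "coverable A Ql (insert j J) n q2 (v2(j := c))"
    using split.IH(2)[OF split.prems(1)] unfolding c_def by blast
  ultimately show ?case using split.hyps(1,5) \<open>0 \<le> x\<close>
    by (intro coverable.split[OF _ split(2)]) (auto simp: proj_config_def)
qed

section \<open>Saturation of the bounded configurations\<close>

lemma mono_chain_stationary:
  fixes P :: "nat \<Rightarrow> 'a set"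
  assumes "finite C" "\<And>n. P n \<subseteq> C" "\<And>n. P n \<subseteq> P (Suc n)"
  shows "\<exists>k \<le> card C. P k = P (Suc k)"
proof (rule ccontr)
  assume strict: "\<not> ?thesis"
  have grow: "k \<le> card (P k)" if "k \<le> Suc (card C)" for k
    using that
  proof (induction k)
    case (Suc k)
    have "P k \<subset> P (Suc k)" using strict assms(3)[of k] Suc.prems by auto
    then have "card (P k) < card (P (Suc k))"
      using finite_subset[OF assms(2) assms(1)] by (rule psubset_card_mono[rotated])
    with Suc show ?case by simp
  qed simp
  have "card (P (Suc (card C))) \<le> card C" using assms(1,2) by (rule card_mono)
  with grow[of "Suc (card C)"] show False by simp
qed

lemma mono_chain_saturates:
  fixes P :: "nat \<Rightarrow> 'a set"
  assumes "finite C" "\<And>n. P n \<subseteq> C" and mono: "\<And>n. P n \<subseteq> P (Suc n)"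
    and stable: "\<And>n. P n = P (Suc n) \<Longrightarrow> P (Suc n) = P (Suc (Suc n))"
  shows "P n \<subseteq> P (card C)"
proof -
  obtain k where k: "k \<le> card C" "P k = P (Suc k)"
    using mono_chain_stationary[of C P, OF assms(1,2) mono] by blast
  have step: "P (k + i) = P (Suc (k + i))" for i
  proof (induction i)
    case 0
    show ?case using k(2) by simp
  next
    case (Suc i)
    show ?case using stable[OF Suc.IH] by simp
  qed
  have const: "P (k + i) = P k" for i
  proof (induction i)
    case (Suc i)
    have "P (k + Suc i) = P (k + i)" using step[of i] by simp
    with Suc.IH show ?case by simp
  qed simp
  have le: "i \<le> j \<Longrightarrow> P i \<subseteq> P j" for i j
    using lift_Suc_mono_le[of P, OF mono] by blast
  show ?thesis
  proof (cases "n \<le> card C")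
    case False
    then have "P n = P k" using const[of "n - k"] k(1) by simp
    then show ?thesis using le[OF k(1)] by simp
  qed (simp add: le)
qed

definition bounded_vectors :: "nat set \<Rightarrow> nat \<Rightarrow> (nat \<Rightarrow> int) set" where
  "bounded_vectors J B = {v. (\<forall>i\<in>J. 0 \<le> v i \<and> v i < int B) \<and> (\<forall>i. i \<notin> J \<longrightarrow> v i = 0)}"

lemma bounded_vectors_eq_image:
  "bounded_vectors J B = proj J ` PiE J (\<lambda>_. {0..<int B})"
proof (intro equalityI subsetI)
  fix v
  assume "v \<in> bounded_vectors J B"
  then have "v = proj J (restrict v J)" "restrict v J \<in> PiE J (\<lambda>_. {0..<int B})"
    by (auto simp: bounded_vectors_def proj_def fun_eq_iff)
  then show "v \<in> proj J ` PiE J (\<lambda>_. {0..<int B})" by blast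
qed (auto simp: bounded_vectors_def proj_def PiE_def)

lemma finite_bounded_vectors: "finite J \<Longrightarrow> finite (bounded_vectors J B)"
  by (simp add: bounded_vectors_eq_image finite_PiE)

lemma card_bounded_vectors:
  assumes "finite J"
  shows "card (bounded_vectors J B) \<le> B ^ card J"
proof -
  have "card (bounded_vectors J B) \<le> card (PiE J (\<lambda>_. {0..<int B}))"
    unfolding bounded_vectors_eq_image using assms by (intro card_image_le) (simp add: finite_PiE)
  also have "\<dots> = B ^ card J" using assms by (simp add: card_PiE)
  finally show ?thesis .
qed

definition small_coverable :: "'q abvass \<Rightarrow> 'q set \<Rightarrow> nat set \<Rightarrow> nat \<Rightarrow> nat \<Rightarrow> ('q \<times> (nat \<Rightarrow> int)) set"
  where "small_coverable A Ql J B n = {(q, v). coverable A Ql J n q v \<and> (\<forall>i\<in>J. v i < int B)}"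

lemma small_coverable_subset: "small_coverable A Ql J B n \<subseteq> states A \<times> bounded_vectors J B"
  by (auto simp: small_coverable_def bounded_vectors_def proj_config_def
      dest: coverable_proj_config)

lemma small_coverable_mono: "small_coverable A Ql J B n \<subseteq> small_coverable A Ql J B (Suc n)"
  by (auto simp: small_coverable_def intro: coverable_mono)

text \<open>Large configurations have trees of height \<open>h0\<close>, so once the small ones stop gaining new
  members at some height \<open>\<ge> h0\<close>, every child of a tree one level higher can be shortened.\<close>

lemma small_coverable_stable:
  assumes large: "\<And>n q v. coverable A Ql J n q v \<Longrightarrow> \<exists>j\<in>J. int B \<le> v j \<Longrightarrow> coverable A Ql J h0 q v"
    and "h0 \<le> n" and eq: "small_coverable A Ql J B n = small_coverable A Ql J B (Suc n)"
  shows "small_coverable A Ql J B (Suc n) = small_coverable A Ql J B (Suc (Suc n))"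
proof
  have shorten: "coverable A Ql J n q' v'" if "coverable A Ql J (Suc n) q' v'" for q' v'
  proof (cases "\<exists>j\<in>J. int B \<le> v' j")
    case True
    then show ?thesis using coverable_mono[OF large[OF that]] \<open>h0 \<le> n\<close> by blast
  next
    case False
    then have "(q', v') \<in> small_coverable A Ql J B (Suc n)"
      using that by (auto simp: small_coverable_def not_le)
    then show ?thesis unfolding eq[symmetric] by (simp add: small_coverable_def)
  qed
  show "small_coverable A Ql J B (Suc (Suc n)) \<subseteq> small_coverable A Ql J B (Suc n)"
    using coverable_Suc_transfer[OF _ shorten] by (auto simp: small_coverable_def)
qed (rule small_coverable_mono)

lemma coverable_height_from_large:
  assumes "finite (states A)" "finite J"
    and large: "\<And>n q v. coverable A Ql J n q v \<Longrightarrow> \<exists>j\<in>J. int B \<le> v j \<Longrightarrow> coverable A Ql J h0 q v"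
    and cov: "coverable A Ql J n q v"
  shows "coverable A Ql J (h0 + card (states A) * B ^ card J) q v"
proof (cases "\<exists>j\<in>J. int B \<le> v j")
  case True
  then show ?thesis using coverable_mono[OF large[OF cov]] by simp
next
  case False
  let ?C = "states A \<times> bounded_vectors J B"
  have "card ?C \<le> card (states A) * B ^ card J"
    using card_bounded_vectors[OF assms(2)] by (simp add: card_cartesian_product)
  have "small_coverable A Ql J B (h0 + n) \<subseteq> small_coverable A Ql J B (h0 + card ?C)"
  proof (rule mono_chain_saturates)
    show "finite ?C" using assms(1,2) finite_bounded_vectors by simp
    show "small_coverable A Ql J B (h0 + k) \<subseteq> ?C" for k by (rule small_coverable_subset)
    show "small_coverable A Ql J B (h0 + k) \<subseteq> small_coverable A Ql J B (h0 + Suc k)" for k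
      using small_coverable_mono by simp
    show "small_coverable A Ql J B (h0 + Suc k) = small_coverable A Ql J B (h0 + Suc (Suc k))"
      if "small_coverable A Ql J B (h0 + k) = small_coverable A Ql J B (h0 + Suc k)" for k
      using small_coverable_stable[where n = "h0 + k", OF large] that by simp
  qed
  moreover have "(q, v) \<in> small_coverable A Ql J B (h0 + n)"
    using False coverable_mono[OF cov] by (auto simp: small_coverable_def not_le)
  ultimately have "coverable A Ql J (h0 + card ?C) q v"
    by (auto simp: small_coverable_def)
  then show ?thesis by (rule coverable_mono) (simp add: \<open>card ?C \<le> _\<close>)
qed

lemma coverable_height_H:
  assumes "finite (states A)"
    and unary_ge: "\<And>q u q1 i. (q, u, q1) \<in> unary A \<Longrightarrow> - int m \<le> zext u i"
  shows "finite J \<Longrightarrow> card J = k \<Longrightarrow> coverable A Ql J n q v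
    \<Longrightarrow> coverable A Ql J (H k (card (states A)) m) q v"
proof (induction k arbitrary: J n q v)
  case 0
  then have "J = {}" by simp
  have "coverable A Ql J (0 + card (states A) * 1 ^ card J) q v"
    by (rule coverable_height_from_large[OF assms(1) 0(1) _ 0(3)]) (simp add: \<open>J = {}\<close>)
  then show ?case by (simp add: \<open>J = {}\<close>)
next
  case (Suc k)
  let ?h = "H k (card (states A)) m"
  have large: "coverable A Ql J ?h q' v'"
    if cov: "coverable A Ql J n' q' v'" and big: "\<exists>j\<in>J. int (m * 2 ^ ?h) \<le> v' j" for n' q' v'
  proof -
    obtain j where j: "j \<in> J" "int (m * 2 ^ ?h) \<le> v' j" using big by blast
    have "finite (J - {j})" "card (J - {j}) = k" using Suc.prems(1,2) j(1) by auto
    from Suc.IH[OF this coverable_proj[OF cov Diff_subset]]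
    have shorter: "coverable A Ql (J - {j}) ?h q' (proj (J - {j}) v')" .
    have "int m * (2 ^ ?h - 1) \<le> v' j" using j(2) by (simp add: algebra_simps)
    with coverable_insert_large[where j = j, OF shorter _ _ unary_ge]
    have "coverable A Ql (insert j (J - {j})) ?h q' ((proj (J - {j}) v')(j := v' j))" by simp
    moreover have "(proj (J - {j}) v')(j := v' j) = v'"
      using coverable_proj_config[OF cov] by (auto simp: fun_eq_iff proj_def proj_config_def)
    ultimately show ?thesis using j(1) by (simp add: insert_absorb)
  qed
  show ?case
    using coverable_height_from_large[where B = "m * 2 ^ ?h", OF assms(1) Suc.prems(1) large Suc.prems(3)]
      Suc.prems(2)
    by (simp add: add.commute)
qed

section \<open>Back and forth between deduction trees and \<open>coverable\<close>\<close>

definition list_of :: "nat \<Rightarrow> (nat \<Rightarrow> int) \<Rightarrow> nat list" where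
  "list_of d v = map (\<lambda>i. nat (v i)) [0..<d]"

lemma length_list_of [simp]: "length (list_of d v) = d"
  by (simp add: list_of_def)

lemma zext_map_int: "zext (map int v) i = (if i < length v then int (v ! i) else 0)"
  by (simp add: zext_def)

lemma list_of_zext: "list_of (length v) (zext (map int v)) = v"
  by (rule nth_equalityI) (simp_all add: list_of_def zext_map_int)

lemma zext_vadd:
  assumes "map int v1 = vadd v u" "length v = d" "length u = d"
  shows "zext (map int v1) = proj {..<d} (\<lambda>i. zext (map int v) i + zext u i)"
proof -
  have "length v1 = d" using arg_cong[OF assms(1), of length] assms(2,3) by (simp add: vadd_def)
  moreover have "int (v1 ! i) = int (v ! i) + u ! i" if "i < d" for i
    using arg_cong[OF assms(1), of "\<lambda>xs. xs ! i"] that assms(2,3) \<open>length v1 = d\<close>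
    by (simp add: vadd_def)
  ultimately show ?thesis using assms(2,3) by (auto simp: fun_eq_iff zext_def proj_def)
qed

lemma zext_map2_add:
  "map2 (+) v1 v2 = v \<Longrightarrow> length v1 = length v2
    \<Longrightarrow> zext (map int v1) i + zext (map int v2) i = zext (map int v) i"
  by (auto simp: zext_map_int)

lemma vadd_list_of:
  assumes "\<forall>i<d. 0 \<le> v i \<and> 0 \<le> v i + zext u i" "length u = d"
  shows "map int (list_of d (proj {..<d} (\<lambda>i. v i + zext u i))) = vadd (list_of d v) u"
  using assms by (intro nth_equalityI) (auto simp: list_of_def vadd_def proj_def zext_def)

lemma map2_add_list_of:
  assumes "\<forall>i<d. 0 \<le> v1 i \<and> 0 \<le> v2 i" "\<forall>i. v1 i + v2 i = v i"
  shows "map2 (+) (list_of d v1) (list_of d v2) = list_of d v"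
  using assms by (intro nth_equalityI) (auto simp: list_of_def simp flip: nat_add_distrib)

lemma step_ok_cases:
  assumes "step_ok A c (map label cs)"
  obtains "cs = []" | t1 where "cs = [t1]" | t1 t2 where "cs = [t1, t2]"
  using assms by (cases cs rule: remdups_adj.cases) (auto simp: step_ok_def split: list.splits)

lemma coverable_of_deduction_tree:
  assumes wf: "wf_abvass A"
  shows "deduction_tree A t \<Longrightarrow> leaf_covering Ql t \<Longrightarrow> label t = (q, v)
    \<Longrightarrow> coverable A Ql {..<dim A} (height t) q (zext (map int v))"
proof (induction t arbitrary: q v)
  case (Node c cs)
  have c: "c = (q, v)" and ok: "step_ok A (q, v) (map label cs)"
    and cfg: "proj_config A {..<dim A} q (zext (map int v))" and len: "length v = dim A"
    using Node.prems by (auto simp: is_config_def proj_config_def zext_map_int)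
  have sub: "deduction_tree A t' \<and> leaf_covering Ql t'" if "t' \<in> set cs" for t'
    using Node.prems that by (auto split: if_splits)
  have child: "coverable A Ql {..<dim A} (height t') q' (zext (map int v'))"
    if "t' \<in> set cs" "label t' = (q', v')" for t' q' v'
    using Node.IH[OF that(1) _ _ that(2)] sub[OF that(1)] by blast
  have child_len: "length v' = dim A" if "t' \<in> set cs" "label t' = (q', v')" for t' q' v'
    using sub[OF that(1)] that(2) by (cases t') (auto simp: is_config_def)
  from ok show ?case
  proof (cases rule: step_ok_cases)
    case 1
    then show ?thesis using Node.prems c cfg by (auto intro: coverable.leaf)
  next
    case (2 t1)
    obtain q1 v1 where l1: "label t1 = (q1, v1)" by fastforce
    with ok 2 obtain u where u: "(q, u, q1) \<in> unary A" "map int v1 = vadd v u"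
      by (auto simp: step_ok_def)
    have "length u = dim A" using wf u(1) by (auto simp: wf_abvass_def)
    with u(2) len have "zext (map int v1) = proj {..<dim A} (\<lambda>i. zext (map int v) i + zext u i)"
      by (rule zext_vadd)
    with child[of t1] 2 l1
    have "coverable A Ql {..<dim A} (height t1) q1 (proj {..<dim A} (\<lambda>i. zext (map int v) i + zext u i))"
      by simp
    from coverable.unary[OF cfg u(1) this] 2 show ?thesis by simp
  next
    case (3 t1 t2)
    obtain q1 v1 q2 v2 where l: "label t1 = (q1, v1)" "label t2 = (q2, v2)" by fastforce
    let ?h = "max (height t2) (max (height t1) 0)"
    have cov: "coverable A Ql {..<dim A} ?h q1 (zext (map int v1))"
      "coverable A Ql {..<dim A} ?h q2 (zext (map int v2))"
      and len12: "length v1 = dim A" "length v2 = dim A"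
      using child[of t1] child[of t2] child_len[of t1] child_len[of t2] 3 l
      by (auto elim: coverable_mono)
    from ok 3 l consider "(q, q1, q2) \<in> fork A" "v1 = v" "v2 = v"
      | "(q, q1, q2) \<in> split A" "map2 (+) v1 v2 = v"
      by (auto simp: step_ok_def)
    then show ?thesis
    proof cases
      case 1
      then show ?thesis using 3 cfg cov by (auto intro: coverable.fork)
    next
      case 2
      then show ?thesis using 3 cfg cov len12
        by (auto intro!: coverable.split simp: zext_map2_add)
    qed
  qed
qed

lemma deduction_tree_of_coverable:
  assumes wf: "wf_abvass A"
  shows "coverable A Ql {..<dim A} n q v \<Longrightarrow> \<exists>t. deduction_tree A t
    \<and> label t = (q, list_of (dim A) v) \<and> leaf_covering Ql t \<and> height t \<le> n"
proof (induction rule: coverable.induct)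
  case (leaf q v n)
  then show ?case
    by (intro exI[of _ "Node (q, list_of (dim A) v) []"])
      (auto simp: is_config_def proj_config_def step_ok_def)
next
  case (unary q v u q1 n)
  then obtain t1 where t1: "deduction_tree A t1" "leaf_covering Ql t1" "height t1 \<le> n"
    "label t1 = (q1, list_of (dim A) (proj {..<dim A} (\<lambda>i. v i + zext u i)))"
    by blast
  have "length u = dim A" using wf unary(2) by (auto simp: wf_abvass_def)
  moreover have "\<forall>i<dim A. 0 \<le> v i \<and> 0 \<le> v i + zext u i"
    using unary(1) coverable_proj_config[OF unary(3)] by (auto simp: proj_config_def proj_def)
  ultimately have "step_ok A (q, list_of (dim A) v) [label t1]"
    using t1(4) unary(2) by (auto simp: step_ok_def vadd_list_of)
  with unary(1) t1 show ?case
    by (intro exI[of _ "Node (q, list_of (dim A) v) [t1]"])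
      (auto simp: is_config_def proj_config_def)
next
  case (fork q v q1 q2 n)
  then obtain t1 t2 where
    "deduction_tree A t1" "label t1 = (q1, list_of (dim A) v)" "leaf_covering Ql t1" "height t1 \<le> n"
    "deduction_tree A t2" "label t2 = (q2, list_of (dim A) v)" "leaf_covering Ql t2" "height t2 \<le> n"
    by blast
  with fork(1,2) show ?case
    by (intro exI[of _ "Node (q, list_of (dim A) v) [t1, t2]"])
      (auto simp: step_ok_def is_config_def proj_config_def)
next
  case (split q v q1 q2 n v1 v2)
  then obtain t1 t2 where
    "deduction_tree A t1" "label t1 = (q1, list_of (dim A) v1)" "leaf_covering Ql t1" "height t1 \<le> n"
    "deduction_tree A t2" "label t2 = (q2, list_of (dim A) v2)" "leaf_covering Ql t2" "height t2 \<le> n"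
    by blast
  moreover have "\<forall>i<dim A. 0 \<le> v1 i \<and> 0 \<le> v2 i"
    using coverable_proj_config[OF split.hyps(3)] coverable_proj_config[OF split.hyps(4)]
    by (auto simp: proj_config_def)
  then have "map2 (+) (list_of (dim A) v1) (list_of (dim A) v2) = list_of (dim A) v"
    using split.hyps(5) by (rule map2_add_list_of)
  ultimately show ?case using split.hyps(1,2)
    by (intro exI[of _ "Node (q, list_of (dim A) v) [t1, t2]"])
      (auto simp: step_ok_def is_config_def proj_config_def)
qed

lemma zext_unary_ge_max_neg:
  assumes wf: "wf_abvass A" and r: "(q, u, q1) \<in> unary A"
  shows "- int (max_neg A) \<le> zext u i"
proof (cases "i < length u \<and> u ! i < 0")
  case True
  let ?S = "{nat (- x) | x q u q1. (q, u, q1) \<in> unary A \<and> x \<in> set u \<and> x < 0}"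
  have "?S \<subseteq> (\<lambda>x. nat (- x)) ` (\<Union>(q, u, q1)\<in>unary A. set u)" by force
  moreover have "finite (\<Union>(q, u, q1)\<in>unary A. set u)"
    using wf by (auto simp: wf_abvass_def)
  ultimately have "finite ?S" by (rule finite_subset[OF _ finite_imageI])
  moreover have "nat (- (u ! i)) \<in> ?S" using True r nth_mem by blast
  ultimately have "nat (- (u ! i)) \<le> max_neg A" unfolding max_neg_def by (intro Max_ge) auto
  then show ?thesis using True by (simp add: zext_def)
qed (auto simp: zext_def)

theorem lemma5p1:
  fixes A :: "'q abvass" and qr :: 'q and v0 :: "nat list" and Ql :: "'q set"
  assumes "wf_abvass A"
    and "qr \<in> states A" and "length v0 = dim A" and "Ql \<subseteq> states A"
    and "\<exists>t. deduction_tree A t \<and> label t = (qr, v0) \<and> leaf_covering Ql t"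
  shows "\<exists>t. deduction_tree A t \<and> label t = (qr, v0) \<and> leaf_covering Ql t
             \<and> height t \<le> H (dim A) (card (states A)) (max_neg A)"
proof -
  obtain t where "deduction_tree A t" "label t = (qr, v0)" "leaf_covering Ql t"
    using assms(5) by blast
  with coverable_of_deduction_tree[OF assms(1)]
  have cov: "coverable A Ql {..<dim A} (height t) qr (zext (map int v0))" by blast
  have fin: "finite (states A)" using assms(1) by (simp add: wf_abvass_def)
  have unary_ge: "\<And>q u q1 i. (q, u, q1) \<in> unary A \<Longrightarrow> - int (max_neg A) \<le> zext u i"
    by (rule zext_unary_ge_max_neg[OF assms(1)])
  note coverable_height_H[OF fin unary_ge finite_lessThan card_lessThan cov]
  from deduction_tree_of_coverable[OF assms(1) this] show ?thesis
    using list_of_zext[of v0] assms(3) by simp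
qed

end
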